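(* Let $M^1=\langle W^1,\mathcal{N}^1,V^1\rangle$ and $M^2=\langle W^2,\mathcal{N}^2,V^2\rangle$ be nIML1-models and let $R\subseteq W^1\times W^2$ be a bisimulation between them. If $w_1Rw_2$, then $w_1$ and $w_2$ force the same formulas: for every formula $\varphi$, $w_1\Vdash_{M^1}\varphi$ iff $w_2\Vdash_{M^2}\varphi$.
   Context: Formulas are built from a denumerable set $PV$ of propositional variables and $\bot$ using binary $\land,\lor,\rightarrow,\rightsquigarrow$ and unary $\Delta$. An nIML1-model is a triple $\langle W,\mathcal{N},V\rangle$ with $W\neq\emptyset$, $\mathcal{N}:W\to P(P(W))$ satisfying for all $w$: (a) $w\in\bigcap\mathcal{N}_w$; (b) $\bigcap\mathcal{N}_w\in\mathcal{N}_w$; (c) $u\in\bigcap\mathcal{N}_w\Rightarrow\bigcap\mathcal{N}_u\subseteq\bigcap\mathcal{N}_w$; (d) $\bigcap\mathcal{N}_w\subseteq X\subseteq\bigcup\mathcal{N}_w\Rightarrow X\in\mathcal{N}_w$; (e) $u\in\bigcap\mathcal{N}_w\Rightarrow\bigcup\mathcal{N}_u\subseteq\bigcup\mathcal{N}_w$ ($\bigcap\mathcal{N}_w$, $\bigcup\mathcal{N}_w$ the intersection and union of the family $\mathcal{N}_w$), and $V:PV\to P(W)$ with $w\in V(q)\Rightarrow\bigcap\mathcal{N}_w\subseteq V(q)$. Forcing: atoms via $V$; $\bot$ never; $\land,\lor$ pointwise; $w\Vdash\varphi\rightarrow\psi$ iff every $v\in\bigcap\mathcal{N}_w$ has $v\nVdash\varphi$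 or $v\Vdash\psi$; $w\Vdash\varphi\rightsquigarrow\psi$ iff every $v\in\bigcup\mathcal{N}_w$ has $v\nVdash\varphi$ or $v\Vdash\psi$; $w\Vdash\Delta\varphi$ iff every $v\in\bigcup\mathcal{N}_w$ has $v\Vdash\varphi$. A bisimulation is a non-empty relation $R\subseteq W^1\times W^2$ such that whenever $w_1Rw_2$: (1) $w_1,w_2$ force the same propositional variables; (2) for every $y\in\bigcap\mathcal{N}^2_{w_2}$ there is $x\in\bigcap\mathcal{N}^1_{w_1}$ with $xRy$; (3) for every $y\in\bigcup\mathcal{N}^2_{w_2}$ there is $x\in\bigcup\mathcal{N}^1_{w_1}$ with $xRy$; (4) for every $x\in\bigcap\mathcal{N}^1_{w_1}$ there is $y\in\bigcap\mathcal{N}^2_{w_2}$ with $xRy$; (5) for every $x\in\bigcup\mathcal{N}^1_{w_1}$ there is $y\in\bigcup\mathcal{N}^2_{w_2}$ with $xRy$. *)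

theory Defs
  imports Main
begin

datatype form =
    Var nat
  | Bot
  | And form form
  | Or form form
  | Imp form form
  | SImp form form
  | Delta form

definition nIML1_model :: "'w set \<Rightarrow> ('w \<Rightarrow> 'w set set) \<Rightarrow> (nat \<Rightarrow> 'w set) \<Rightarrow> bool" where
  "nIML1_model W N V \<longleftrightarrow>
     W \<noteq> {} \<and>
     (\<forall>w\<in>W. N w \<subseteq> Pow W) \<and>
     (\<forall>w\<in>W. w \<in> \<Inter>(N w)) \<and>
     (\<forall>w\<in>W. \<Inter>(N w) \<in> N w) \<and>
     (\<forall>w\<in>W. \<forall>u. u \<in> \<Inter>(N w) \<longrightarrow> \<Inter>(N u) \<subseteq> \<Inter>(N w)) \<and>
     (\<forall>w\<in>W. \<forall>X. \<Inter>(N w) \<subseteq> X \<and> X \<subseteq> \<Union>(N w) \<longrightarrow> X \<in> N w) \<and>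
     (\<forall>w\<in>W. \<forall>u. u \<in> \<Inter>(N w) \<longrightarrow> \<Union>(N u) \<subseteq> \<Union>(N w)) \<and>
     (\<forall>q. V q \<subseteq> W) \<and>
     (\<forall>q. \<forall>w\<in>W. w \<in> V q \<longrightarrow> \<Inter>(N w) \<subseteq> V q)"

fun forces :: "('w \<Rightarrow> 'w set set) \<Rightarrow> (nat \<Rightarrow> 'w set) \<Rightarrow> 'w \<Rightarrow> form \<Rightarrow> bool" where
  "forces N V w (Var q) = (w \<in> V q)"
| "forces N V w Bot = False"
| "forces N V w (And a b) = (forces N V w a \<and> forces N V w b)"
| "forces N V w (Or a b) = (forces N V w a \<or> forces N V w b)"
| "forces N V w (Imp a b) = (\<forall>v\<in>\<Inter>(N w). \<not> forces N V v a \<or> forces N V v b)"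
| "forces N V w (SImp a b) = (\<forall>v\<in>\<Union>(N w). \<not> forces N V v a \<or> forces N V v b)"
| "forces N V w (Delta a) = (\<forall>v\<in>\<Union>(N w). forces N V v a)"

definition bisimulation ::
  "'a set \<Rightarrow> ('a \<Rightarrow> 'a set set) \<Rightarrow> (nat \<Rightarrow> 'a set) \<Rightarrow>
   'b set \<Rightarrow> ('b \<Rightarrow> 'b set set) \<Rightarrow> (nat \<Rightarrow> 'b set) \<Rightarrow> ('a \<times> 'b) set \<Rightarrow> bool" where
  "bisimulation W1 N1 V1 W2 N2 V2 R \<longleftrightarrow>
     R \<noteq> {} \<and> R \<subseteq> W1 \<times> W2 \<and>
     (\<forall>w1 w2. (w1, w2) \<in> R \<longrightarrow>
        (\<forall>q. w1 \<in> V1 q \<longleftrightarrow> w2 \<in> V2 q) \<and>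
        (\<forall>y\<in>\<Inter>(N2 w2). \<exists>x\<in>\<Inter>(N1 w1). (x, y) \<in> R) \<and>
        (\<forall>y\<in>\<Union>(N2 w2). \<exists>x\<in>\<Union>(N1 w1). (x, y) \<in> R) \<and>
        (\<forall>x\<in>\<Inter>(N1 w1). \<exists>y\<in>\<Inter>(N2 w2). (x, y) \<in> R) \<and>
        (\<forall>x\<in>\<Union>(N1 w1). \<exists>y\<in>\<Union>(N2 w2). (x, y) \<in> R))"

end

theory Submission
  imports Defs
begin

text \<open>The clauses for strict implication, implication and Delta quantify universally over
  the intersection or the union of the neighbourhoods of a world; the back-and-forth conditions
  of a bisimulation say exactly that such a quantification is preserved when the quantified
  property is invariant along R. Induction on the formula then gives the theorem.\<close>

lemma Ball_bisim_iff:
  assumes "\<forall>x\<in>A. \<exists>y\<in>B. (x, y) \<in> R"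
    and "\<forall>y\<in>B. \<exists>x\<in>A. (x, y) \<in> R"
    and "\<And>x y. (x, y) \<in> R \<Longrightarrow> P x \<longleftrightarrow> Q y"
  shows "(\<forall>x\<in>A. P x) \<longleftrightarrow> (\<forall>y\<in>B. Q y)"
  using assms by metis

lemma bisimulation_forces_iff:
  assumes B: "bisimulation W1 N1 V1 W2 N2 V2 R"
  shows "(w1, w2) \<in> R \<Longrightarrow> forces N1 V1 w1 \<phi> \<longleftrightarrow> forces N2 V2 w2 \<phi>"
proof (induction \<phi> arbitrary: w1 w2)
  case (Var q)
  then show ?case using B unfolding bisimulation_def by simp
next
  case (Imp a b)
  have "\<forall>x\<in>\<Inter>(N1 w1). \<exists>y\<in>\<Inter>(N2 w2). (x, y) \<in> R"
    and "\<forall>y\<in>\<Inter>(N2 w2). \<exists>x\<in>\<Inter>(N1 w1). (x, y) \<in> R"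
    using B Imp.prems unfolding bisimulation_def by blast+
  then show ?case
    unfolding forces.simps by (rule Ball_bisim_iff) (use Imp.IH in blast)+
next
  case (SImp a b)
  have "\<forall>x\<in>\<Union>(N1 w1). \<exists>y\<in>\<Union>(N2 w2). (x, y) \<in> R"
    and "\<forall>y\<in>\<Union>(N2 w2). \<exists>x\<in>\<Union>(N1 w1). (x, y) \<in> R"
    using B SImp.prems unfolding bisimulation_def by blast+
  then show ?case
    unfolding forces.simps by (rule Ball_bisim_iff) (use SImp.IH in blast)+
next
  case (Delta a)
  have "\<forall>x\<in>\<Union>(N1 w1). \<exists>y\<in>\<Union>(N2 w2). (x, y) \<in> R"
    and "\<forall>y\<in>\<Union>(N2 w2). \<exists>x\<in>\<Union>(N1 w1). (x, y) \<in> R"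
    using B Delta.prems unfolding bisimulation_def by blast+
  then show ?case
    unfolding forces.simps by (rule Ball_bisim_iff) (use Delta.IH in blast)+
qed simp_all

theorem theorem7p3:
  fixes W1 :: "'a set" and N1 :: "'a \<Rightarrow> 'a set set" and V1 :: "nat \<Rightarrow> 'a set"
    and W2 :: "'b set" and N2 :: "'b \<Rightarrow> 'b set set" and V2 :: "nat \<Rightarrow> 'b set"
    and R :: "('a \<times> 'b) set"
  assumes "nIML1_model W1 N1 V1"
    and "nIML1_model W2 N2 V2"
    and "bisimulation W1 N1 V1 W2 N2 V2 R"
    and "(w1, w2) \<in> R"
  shows "\<forall>\<phi>. forces N1 V1 w1 \<phi> \<longleftrightarrow> forces N2 V2 w2 \<phi>"
  using bisimulation_forces_iff[OF assms(3) assms(4)] by blast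

end
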